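(* Let $G$ be a very well-covered graph with $V(G)=X\cup Y$, $X=\{x_1,\ldots,x_h\}$ a minimal vertex cover, $Y=\{y_1,\ldots,y_h\}$ a maximal independent set, and $\{x_i,y_i\}\in E(G)$ for all $i$. Fix $i\in\{1,\ldots,h\}$ and write $N_G(x_i)\setminus X=\{y_{i_1},\ldots,y_{i_t}\}$. For $j\in\{1,\dots,h\}$ put $x_j'=y_j$ and $y_j'=x_j$ if $j\in\{i_1,\ldots,i_t\}$, and $x_j'=x_j$, $y_j'=y_j$ otherwise; let $X'=\{x_1',\ldots,x_h'\}$ and $Y'=V(G)\setminus X'=\{y_1',\dots,y_h'\}$. Let $G_1$ be $G$ with this relabelling. Then $X'$ is a minimal vertex cover of $G_1$, $Y'$ is a maximal independent set of $G_1$, $\{x_j',y_j'\}\in E(G_1)$ for all $j$, and $G_1$ with respect to the labelling $x_j',y_j'$ satisfies: (1) if $\{z_a,x_b'\},\{y_b',x_c'\}\in E(G_1)$ for distinct $a,b,c$ and $z_a\in\{x_a',y_a'\}$, then $\{z_a,x_c'\}\in E(G_1)$; (2) if $\{x_a',y_b'\}\in E(G_1)$ then $\{x_a',x_b'\}\notin E(G_1)$.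
   Context: $G$ is very well-covered if it has no isolated vertices, all minimal vertex covers have the same size, and this size is $|V(G)|/2$. $N_G(v)$ denotes the set of neighbours of $v$ in $G$. *)

theory Defs
  imports Main
begin

definition simple_graph :: "'a set \<Rightarrow> ('a \<Rightarrow> 'a \<Rightarrow> bool) \<Rightarrow> bool" where
  "simple_graph V E \<longleftrightarrow> finite V \<and> (\<forall>u v. E u v \<longrightarrow> u \<in> V \<and> v \<in> V)
     \<and> (\<forall>u v. E u v \<longrightarrow> E v u) \<and> (\<forall>u. \<not> E u u)"

definition vertex_cover :: "'a set \<Rightarrow> ('a \<Rightarrow> 'a \<Rightarrow> bool) \<Rightarrow> 'a set \<Rightarrow> bool" where
  "vertex_cover V E C \<longleftrightarrow> C \<subseteq> V \<and> (\<forall>u v. E u v \<longrightarrow> u \<in> C \<or> v \<in> C)"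

definition minimal_vertex_cover :: "'a set \<Rightarrow> ('a \<Rightarrow> 'a \<Rightarrow> bool) \<Rightarrow> 'a set \<Rightarrow> bool" where
  "minimal_vertex_cover V E C \<longleftrightarrow> vertex_cover V E C \<and> (\<forall>D. D \<subset> C \<longrightarrow> \<not> vertex_cover V E D)"

definition independent_set :: "'a set \<Rightarrow> ('a \<Rightarrow> 'a \<Rightarrow> bool) \<Rightarrow> 'a set \<Rightarrow> bool" where
  "independent_set V E S \<longleftrightarrow> S \<subseteq> V \<and> (\<forall>u\<in>S. \<forall>v\<in>S. \<not> E u v)"

definition maximal_independent_set :: "'a set \<Rightarrow> ('a \<Rightarrow> 'a \<Rightarrow> bool) \<Rightarrow> 'a set \<Rightarrow> bool" where
  "maximal_independent_set V E S \<longleftrightarrow> independent_set V E S \<and> (\<forall>T. S \<subset> T \<longrightarrow> \<not> independent_set V E T)"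

definition very_well_covered :: "'a set \<Rightarrow> ('a \<Rightarrow> 'a \<Rightarrow> bool) \<Rightarrow> bool" where
  "very_well_covered V E \<longleftrightarrow> (\<forall>v\<in>V. \<exists>u. E v u)
     \<and> (\<forall>C. minimal_vertex_cover V E C \<longrightarrow> 2 * card C = card V)"

end

theory Submission
  imports Defs
begin

text \<open>Every maximal
  independent set has size \<open>|V|/2\<close>, so it meets every matching edge. Hence if
  \<open>u \<sim> x\<^sub>j\<close> and \<open>w \<sim> y\<^sub>j\<close>, then \<open>u \<sim> w\<close>: otherwise \<open>{u, w}\<close> would extend to a
  maximal independent set containing \<open>x\<^sub>j\<close> or \<open>y\<^sub>j\<close>. This one property is
  invariant under exchanging the ends of any matching edges, so it yields
  both conditions (1) and (2) for the relabelled graph, and it is also what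
  shows that the relabelled \<open>Y'\<close> is independent.\<close>

lemma independent_set_extends_to_maximal:
  assumes "finite V" and "independent_set V E I"
  obtains S where "I \<subseteq> S" and "maximal_independent_set V E S"
proof -
  let ?A = "{S. I \<subseteq> S \<and> independent_set V E S}"
  have "?A \<subseteq> Pow V"
    by (auto simp: independent_set_def)
  then have "finite ?A"
    using assms(1) by (simp add: finite_subset)
  moreover have "I \<in> ?A" using assms(2) by blast
  ultimately obtain S where "S \<in> ?A" and "\<forall>T\<in>?A. S \<subseteq> T \<longrightarrow> S = T"
    using finite_has_maximal2[of ?A I] by blast
  then have "I \<subseteq> S" and "maximal_independent_set V E S"
    unfolding maximal_independent_set_def by blast+
  then show thesis by (rule that)
qed

lemma minimal_vertex_cover_complement:
  assumes "simple_graph V E" and "maximal_independent_set V E S"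
  shows "minimal_vertex_cover V E (V - S)"
proof -
  have edge_in_V: "E u v \<Longrightarrow> u \<in> V \<and> v \<in> V" for u v
    using assms(1) unfolding simple_graph_def by blast
  have indep: "\<forall>u\<in>S. \<forall>v\<in>S. \<not> E u v" and max: "\<And>T. S \<subset> T \<Longrightarrow> \<not> independent_set V E T"
    using assms(2) unfolding maximal_independent_set_def independent_set_def by blast+
  have cover: "vertex_cover V E (V - S)"
    unfolding vertex_cover_def using edge_in_V indep by blast
  have "\<not> vertex_cover V E D" if D: "D \<subset> V - S" for D
  proof
    assume D_cover: "vertex_cover V E D"
    obtain w where w: "w \<in> V - S" "w \<notin> D" using D by blast
    have "independent_set V E (insert w S)"
      unfolding independent_set_def
    proof (intro conjI ballI)
      show "insert w S \<subseteq> V" using w assms(2) unfolding maximal_independent_set_def independent_set_def by blast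
      fix u v assume "u \<in> insert w S" "v \<in> insert w S"
      moreover have "u \<notin> D" if "u \<in> insert w S" for u using that w D by blast
      ultimately show "\<not> E u v"
        using D_cover indep unfolding vertex_cover_def by blast
    qed
    then show False using max w by blast
  qed
  with cover show ?thesis unfolding minimal_vertex_cover_def by blast
qed

lemma card_maximal_independent_set:
  assumes "simple_graph V E" and "very_well_covered V E" and "maximal_independent_set V E S"
  shows "2 * card S = card V"
proof -
  have "finite V" and "S \<subseteq> V"
    using assms unfolding simple_graph_def maximal_independent_set_def independent_set_def by auto
  moreover have "2 * card (V - S) = card V"
    using assms minimal_vertex_cover_complement unfolding very_well_covered_def by blast
  ultimately show ?thesis
    using card_Diff_subset[of S V] card_mono[of V S] finite_subset[of S V] by simp
qed

definition swap_on :: "'i set \<Rightarrow> ('i \<Rightarrow> 'a) \<Rightarrow> ('i \<Rightarrow> 'a) \<Rightarrow> 'i \<Rightarrow> 'a" where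
  "swap_on T f g = (\<lambda>j. if j \<in> T then g j else f j)"

locale very_well_covered_matching =
  fixes V :: "'a set" and E :: "'a \<Rightarrow> 'a \<Rightarrow> bool"
    and x y :: "'i \<Rightarrow> 'a" and K :: "'i set"
  assumes graph: "simple_graph V E"
    and vwc: "very_well_covered V E"
    and inj_x: "inj_on x K" and inj_y: "inj_on y K"
    and V_eq: "V = x ` K \<union> y ` K"
    and disjoint: "x ` K \<inter> y ` K = {}"
    and matching: "\<And>j. j \<in> K \<Longrightarrow> E (x j) (y j)"
begin

lemma edge_sym: "E u v \<Longrightarrow> E v u"
  using graph unfolding simple_graph_def by blast

lemma edge_irrefl: "\<not> E u u"
  using graph unfolding simple_graph_def by blast

lemma finite_K: "finite K"
proof -
  have "finite (x ` K)"
    using graph V_eq unfolding simple_graph_def by (auto intro: finite_subset)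
  then show ?thesis
    using finite_image_iff[OF inj_x] by blast
qed

lemma card_V: "card V = 2 * card K"
  using finite_K disjoint inj_x inj_y
  by (simp add: V_eq card_Un_disjoint card_image)

lemma maximal_independent_set_meets_pair:
  assumes S: "maximal_independent_set V E S" and j: "j \<in> K"
  shows "x j \<in> S \<or> y j \<in> S"
proof (rule ccontr)
  assume miss: "\<not> (x j \<in> S \<or> y j \<in> S)"
  have S_V: "S \<subseteq> V" and indep: "\<forall>u\<in>S. \<forall>v\<in>S. \<not> E u v"
    using S unfolding maximal_independent_set_def independent_set_def by blast+
  have "S \<subseteq> (\<Union>k\<in>K - {j}. S \<inter> {x k, y k})"
  proof
    fix s assume "s \<in> S"
    moreover obtain k where "k \<in> K" and "s = x k \<or> s = y k"
      using S_V V_eq \<open>s \<in> S\<close> by blast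
    ultimately show "s \<in> (\<Union>k\<in>K - {j}. S \<inter> {x k, y k})"
      using miss by blast
  qed
  then have "card S \<le> card (\<Union>k\<in>K - {j}. S \<inter> {x k, y k})"
    by (rule card_mono[rotated]) (simp add: finite_K)
  also have "\<dots> \<le> (\<Sum>k\<in>K - {j}. card (S \<inter> {x k, y k}))"
    by (rule card_UN_le) (simp add: finite_K)
  also have "\<dots> \<le> (\<Sum>k\<in>K - {j}. 1)"
  proof (rule sum_mono)
    fix k assume "k \<in> K - {j}"
    then have "\<not> (x k \<in> S \<and> y k \<in> S)"
      using indep matching by blast
    then have "S \<inter> {x k, y k} \<subseteq> {x k} \<or> S \<inter> {x k, y k} \<subseteq> {y k}"
      by blast
    then show "card (S \<inter> {x k, y k}) \<le> 1"
      by (metis card.empty card.insert card_mono empty_iff finite.emptyI finite.insertI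
          One_nat_def)
  qed
  also have "\<dots> = card (K - {j})"
    by simp
  also have "\<dots> < card K"
    using finite_K j by (rule card_Diff1_less)
  finally show False
    using card_maximal_independent_set[OF graph vwc S] card_V by simp
qed

lemma neighbours_of_ends_adjacent:
  assumes j: "j \<in> K" and ux: "E u (x j)" and wy: "E w (y j)"
  shows "E u w"
proof (rule ccontr)
  assume "\<not> E u w"
  then have "independent_set V E {u, w}"
    using graph ux wy edge_sym edge_irrefl unfolding simple_graph_def independent_set_def by blast
  moreover have "finite V"
    using graph unfolding simple_graph_def by blast
  ultimately obtain S where uw: "{u, w} \<subseteq> S" and S: "maximal_independent_set V E S"
    using independent_set_extends_to_maximal by blast
  have "\<forall>a\<in>S. \<forall>b\<in>S. \<not> E a b"
    using S unfolding maximal_independent_set_def independent_set_def by blast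
  then show False
    using maximal_independent_set_meets_pair[OF S j] uw ux wy by blast
qed

lemma not_adjacent_to_both_ends:
  assumes "j \<in> K" and "E u (y j)"
  shows "\<not> E u (x j)"
  using neighbours_of_ends_adjacent[OF assms(1) _ assms(2)] edge_irrefl by blast

lemma Diff_x_image: "V - x ` K = y ` K"
  using V_eq disjoint by blast

lemma maximal_independent_set_if_independent:
  assumes "independent_set V E (y ` K)"
  shows "maximal_independent_set V E (y ` K)"
  unfolding maximal_independent_set_def
proof (intro conjI assms allI impI notI)
  fix T assume T: "y ` K \<subset> T" and "independent_set V E T"
  then obtain j where "j \<in> K" and "x j \<in> T"
    using V_eq unfolding independent_set_def by blast
  with T \<open>independent_set V E T\<close> show False
    using matching unfolding independent_set_def by blast
qed

lemma minimal_vertex_cover_if_independent: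
  assumes "independent_set V E (y ` K)"
  shows "minimal_vertex_cover V E (x ` K)"
proof -
  have "x ` K = V - y ` K"
    using V_eq disjoint by blast
  then show ?thesis
    using minimal_vertex_cover_complement[OF graph maximal_independent_set_if_independent[OF assms]]
    by simp
qed

lemma swap_on_matching: "very_well_covered_matching V E (swap_on T x y) (swap_on T y x) K"
proof -
  have xx: "x a = x b \<longleftrightarrow> a = b" and yy: "y a = y b \<longleftrightarrow> a = b" and xy: "x a \<noteq> y b" and yx: "y a \<noteq> x b"
    if "a \<in> K" "b \<in> K" for a b
    using that inj_x inj_y disjoint by (auto dest: inj_onD)
  show ?thesis
  proof
    show "inj_on (swap_on T x y) K" and "inj_on (swap_on T y x) K"
      unfolding swap_on_def inj_on_def using xx yy xy by (simp_all, metis)+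
    show "V = swap_on T x y ` K \<union> swap_on T y x ` K"
      unfolding V_eq swap_on_def by auto
    show "swap_on T x y ` K \<inter> swap_on T y x ` K = {}"
      unfolding swap_on_def using xx yy xy yx by auto
    show "E (swap_on T x y j) (swap_on T y x j)" if "j \<in> K" for j
      using matching[OF that] edge_sym unfolding swap_on_def by auto
  qed (use graph vwc in auto)
qed

lemma independent_swap_neighbours:
  assumes i: "i \<in> K" and indep: "independent_set V E (y ` K)"
  defines "N \<equiv> {k \<in> K. E (x i) (y k)}"
  shows "independent_set V E (swap_on N y x ` K)"
proof -
  have xy: "\<not> E (x k) (y l)" if "k \<in> N" "l \<in> K - N" for k l
  proof
    assume "E (x k) (y l)"
    then have "E (y l) (x i)"
      using that neighbours_of_ends_adjacent[of k "y l" "x i"] edge_sym unfolding N_def by blast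
    then show False using that edge_sym unfolding N_def by blast
  qed
  have xx: "\<not> E (x k) (x l)" if "k \<in> N" "l \<in> N" for k l
  proof
    assume "E (x k) (x l)"
    then have "E (x k) (x i)"
      using that neighbours_of_ends_adjacent[of l "x k" "x i"] unfolding N_def by blast
    then show False
      using that not_adjacent_to_both_ends[of k "x i"] edge_sym unfolding N_def by blast
  qed
  have "swap_on N y x ` K \<subseteq> V"
    using V_eq unfolding swap_on_def by auto
  moreover have "\<not> E (swap_on N y x k) (swap_on N y x l)" if "k \<in> K" "l \<in> K" for k l
    using that xy[of k l] xy[of l k] xx[of k l] indep edge_sym
    unfolding swap_on_def independent_set_def by (auto split: if_splits)
  ultimately show ?thesis
    unfolding independent_set_def by blast
qed

end

theorem lemma3p4:
  fixes V :: "'a set" and E :: "'a \<Rightarrow> 'a \<Rightarrow> bool"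
    and x y :: "nat \<Rightarrow> 'a" and h i :: nat
  assumes graph: "simple_graph V E"
    and vwc: "very_well_covered V E"
    and inj_x: "inj_on x {1..h}" and inj_y: "inj_on y {1..h}"
    and V_eq: "V = x ` {1..h} \<union> y ` {1..h}"
    and X_mvc: "minimal_vertex_cover V E (x ` {1..h})"
    and Y_mis: "maximal_independent_set V E (y ` {1..h})"
    and match: "\<forall>j\<in>{1..h}. E (x j) (y j)"
    and i: "i \<in> {1..h}"
  defines "x' \<equiv> (\<lambda>j. if j \<in> {k \<in> {1..h}. E (x i) (y k)} then y j else x j)"
    and "y' \<equiv> (\<lambda>j. if j \<in> {k \<in> {1..h}. E (x i) (y k)} then x j else y j)"
  shows "(minimal_vertex_cover V E (x' ` {1..h}))
     \<and> (V - x' ` {1..h} = y' ` {1..h})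
     \<and> (maximal_independent_set V E (V - x' ` {1..h}))
     \<and> (\<forall>j\<in>{1..h}. E (x' j) (y' j))
     \<and> (\<forall>a\<in>{1..h}. \<forall>b\<in>{1..h}. \<forall>c\<in>{1..h}. a \<noteq> b \<and> b \<noteq> c \<and> a \<noteq> c \<longrightarrow> (\<forall>z\<in>{x' a, y' a}. E z (x' b) \<and> E (y' b) (x' c) \<longrightarrow> E z (x' c)))
     \<and> (\<forall>a\<in>{1..h}. \<forall>b\<in>{1..h}. E (x' a) (y' b) \<longrightarrow> \<not> E (x' a) (x' b))"
proof -
  have indep_Y: "independent_set V E (y ` {1..h})"
    using Y_mis unfolding maximal_independent_set_def by blast
  have "x ` {1..h} \<inter> y ` {1..h} = {}"
    using indep_Y match unfolding independent_set_def by fastforce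
  then interpret G: very_well_covered_matching V E x y "{1..h}"
    using graph vwc inj_x inj_y V_eq match by unfold_locales auto
  define N where "N = {k \<in> {1..h}. E (x i) (y k)}"
  have x'_eq: "x' = swap_on N x y" and y'_eq: "y' = swap_on N y x"
    unfolding x'_def y'_def N_def swap_on_def by simp_all
  interpret G': very_well_covered_matching V E x' y' "{1..h}"
    unfolding x'_eq y'_eq by (rule G.swap_on_matching)
  have indep_Y': "independent_set V E (y' ` {1..h})"
    unfolding y'_eq N_def using G.independent_swap_neighbours[OF i indep_Y] .
  show ?thesis
  proof (intro conjI ballI impI)
    show "minimal_vertex_cover V E (x' ` {1..h})"
      using indep_Y' by (rule G'.minimal_vertex_cover_if_independent)
    show "V - x' ` {1..h} = y' ` {1..h}"
      by (rule G'.Diff_x_image)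
    show "maximal_independent_set V E (V - x' ` {1..h})"
      unfolding G'.Diff_x_image using indep_Y' by (rule G'.maximal_independent_set_if_independent)
    show "E (x' j) (y' j)" if "j \<in> {1..h}" for j
      using that by (rule G'.matching)
    show "E z (x' c)" if "b \<in> {1..h}" and "E z (x' b) \<and> E (y' b) (x' c)" for b c z
      using that G'.neighbours_of_ends_adjacent[of b z "x' c"] G'.edge_sym by blast
    show "\<not> E (x' a) (x' b)" if "b \<in> {1..h}" and "E (x' a) (y' b)" for a b
      using that by (rule G'.not_adjacent_to_both_ends)
  qed
qed

end
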